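(* Let $\mathsf X$ be a primitive cyclically reduced linear word in $\mathbb A_q$, and let $(i,j)$ and $(k,h)$ be linking pairs in $I(\mathsf X,\mathsf X)$ which are not equivalent under $\mathcal R(\mathsf X,\mathsf X)$. Let $p,q'$ be distinct positive integers with $p\ge3$ or $q'\ge3$. Then $\widehat{\mathsf X_i^p\mathsf X_j^{q'}}\neq\widehat{\mathsf X_k^p\mathsf X_h^{q'}}$.
   Context: Words. Fix $q\ge1$ and an alphabet $\mathbb A_q=\{a_1,\dots,a_q,\bar a_1,\dots,\bar a_q\}$ of $2q$ letters with a fixed linear order; set $\bar{\bar v}=v$. A linear word is a non-empty finite sequence $\mathsf V=v_0v_1\cdots v_{n-1}$ of letters, $n$ its length; subscripts are read modulo the length. $\bar{\mathsf V}=\bar v_{n-1}\cdots\bar v_0$. $\mathsf V$ is cyclically reduced if $v_i\ne\bar v_{i+1}$ for all $i$ (indices mod $n$). For an integer $j$, $\mathsf V_j=v_jv_{j+1}\cdots v_{n-1}v_0\cdots v_{j-1}$, and $\mathsf V_j^k$ means $(\mathsf V_j)^k$. Cyclic words are the equivalence classes of words under the equivalence generated by cyclic permutations and $\mathsf W\sim\mathsf Wv\bar v$ (conjugacy classes of the free group on $a_1,\dots,a_q$); $\widehat{\mathsf V}$ is the class of $\mathsf V$. A cyclically reduced word is primitive if it is not of the form $\mathsf U^r$ with $r\ge2$. Equivalence relation. For cyclically reduced $\mathsf V=v_0\cdots v_{n-1}$, $\mathsf W=w_0\cdots w_{m-1}$ let $I(\mathsf V,\mathsf W)=\{(j,k):0\le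 j<n,\,0\le k<m\}$ (entries read mod $n$ and mod $m$) and $\mathcal R(\mathsf V,\mathsf W)$ the equivalence relation generated by $(j,k)\sim(j+1,k+1)$ whenever $v_j=w_k$, and $(j+1,k)\sim(j,k+1)$ whenever $v_j=\bar w_k$. Sign. For reduced half-infinite words $\mathsf T=t_0t_1\cdots$, $\mathsf U=u_0u_1\cdots$, $\mathsf T<\mathsf U$ if $t_0<u_0$, or if for some $j\ge0$, $t_i=u_i$ for $0\le i\le j$ and $t_{j+1}$ precedes $u_{j+1}$ in the order obtained by cyclically permuting the order of $\mathbb A_q$ so that $\bar t_j$ is first. $\mathsf V^{\infty}=\mathsf V\mathsf V\cdots$, $\mathsf V^{-\infty}=\bar{\mathsf V}\bar{\mathsf V}\cdots$. A 4-tuple is cyclically ordered if some cyclic permutation of it is strictly increasing. $\mathsf s_{\mathsf V,\mathsf W}(i,j)=1$ if $(\mathsf V_i^\infty,\mathsf W_j^\infty,\mathsf V_i^{-\infty},\mathsf W_j^{-\infty})$ is cyclically ordered, $-1$ if $(\mathsf V_i^\infty,\mathsf W_j^{-\infty},\mathsf V_i^{-\infty},\mathsf W_j^{\infty})$ is cyclically ordered, $0$ otherwise. A pair $(i,j)\in I(\mathsf V,\mathsf W)$ is a linking pair if $\mathsf s_{\mathsf V,\mathsf W}(i,j)\neq0$. *)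

theory Defs
  imports Main
begin

text \<open>Letters: (i, False) is a_i, (i, True) is the inverse letter of a_i.\<close>
type_synonym letter = "nat \<times> bool"

definition alphabet :: "nat \<Rightarrow> letter set" where
  "alphabet q = {(i, b). 1 \<le> i \<and> i \<le> q}"

definition bar :: "letter \<Rightarrow> letter" where
  "bar v = (fst v, \<not> snd v)"

text \<open>The fixed linear order of the alphabet is given by a list enumerating it.\<close>
definition valid_order :: "nat \<Rightarrow> letter list \<Rightarrow> bool" where
  "valid_order q ord \<longleftrightarrow> distinct ord \<and> set ord = alphabet q"

definition idx :: "letter list \<Rightarrow> letter \<Rightarrow> nat" where
  "idx ord x = (LEAST i. i < length ord \<and> ord ! i = x)"

text \<open>Rank of x in the order cyclically permuted so that c comes first.\<close>
definition rk :: "letter list \<Rightarrow> letter \<Rightarrow> letter \<Rightarrow> nat" where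
  "rk ord c x = (idx ord x + length ord - idx ord c) mod length ord"

definition word_bar :: "letter list \<Rightarrow> letter list" where
  "word_bar V = rev (map bar V)"

definition wpow :: "letter list \<Rightarrow> nat \<Rightarrow> letter list" where
  "wpow V k = concat (replicate k V)"

definition cyc_reduced :: "letter list \<Rightarrow> bool" where
  "cyc_reduced V \<longleftrightarrow> V \<noteq> [] \<and>
     (\<forall>i < length V. V ! i \<noteq> bar (V ! ((i + 1) mod length V)))"

definition primitive :: "letter list \<Rightarrow> bool" where
  "primitive V \<longleftrightarrow> cyc_reduced V \<and> \<not> (\<exists>U r. r \<ge> 2 \<and> V = wpow U r)"

definition inf_pow :: "letter list \<Rightarrow> nat \<Rightarrow> letter" where
  "inf_pow V n = V ! (n mod length V)"

definition neg_inf_pow :: "letter list \<Rightarrow> nat \<Rightarrow> letter" where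
  "neg_inf_pow V = inf_pow (word_bar V)"

definition hless :: "letter list \<Rightarrow> (nat \<Rightarrow> letter) \<Rightarrow> (nat \<Rightarrow> letter) \<Rightarrow> bool" where
  "hless ord T U \<longleftrightarrow> idx ord (T 0) < idx ord (U 0) \<or>
     (\<exists>j. (\<forall>i \<le> j. T i = U i) \<and>
          rk ord (bar (T j)) (T (Suc j)) < rk ord (bar (T j)) (U (Suc j)))"

definition cyc_ordered :: "letter list \<Rightarrow> (nat \<Rightarrow> letter) \<Rightarrow> (nat \<Rightarrow> letter) \<Rightarrow>
    (nat \<Rightarrow> letter) \<Rightarrow> (nat \<Rightarrow> letter) \<Rightarrow> bool" where
  "cyc_ordered ord a b c d \<longleftrightarrow>
     (hless ord a b \<and> hless ord b c \<and> hless ord c d) \<or>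
     (hless ord b c \<and> hless ord c d \<and> hless ord d a) \<or>
     (hless ord c d \<and> hless ord d a \<and> hless ord a b) \<or>
     (hless ord d a \<and> hless ord a b \<and> hless ord b c)"

definition sgn_pair :: "letter list \<Rightarrow> letter list \<Rightarrow> letter list \<Rightarrow> nat \<Rightarrow> nat \<Rightarrow> int" where
  "sgn_pair ord V W i j =
     (if cyc_ordered ord (inf_pow (rotate i V)) (inf_pow (rotate j W))
                         (neg_inf_pow (rotate i V)) (neg_inf_pow (rotate j W)) then 1
      else if cyc_ordered ord (inf_pow (rotate i V)) (neg_inf_pow (rotate j W))
                         (neg_inf_pow (rotate i V)) (inf_pow (rotate j W)) then -1
      else 0)"

definition linking_pair :: "letter list \<Rightarrow> letter list \<Rightarrow> letter list \<Rightarrow> nat \<times> nat \<Rightarrow> bool" where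
  "linking_pair ord V W ij \<longleftrightarrow> fst ij < length V \<and> snd ij < length W \<and>
     sgn_pair ord V W (fst ij) (snd ij) \<noteq> 0"

inductive R_step :: "letter list \<Rightarrow> letter list \<Rightarrow> nat \<times> nat \<Rightarrow> nat \<times> nat \<Rightarrow> bool"
  for V W where
  diag: "\<lbrakk> j < length V; k < length W; V ! j = W ! k \<rbrakk> \<Longrightarrow>
     R_step V W (j, k) ((j + 1) mod length V, (k + 1) mod length W)"
| anti: "\<lbrakk> j < length V; k < length W; V ! j = bar (W ! k) \<rbrakk> \<Longrightarrow>
     R_step V W ((j + 1) mod length V, k) (j, (k + 1) mod length W)"

definition R_equiv :: "letter list \<Rightarrow> letter list \<Rightarrow> nat \<times> nat \<Rightarrow> nat \<times> nat \<Rightarrow> bool" where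
  "R_equiv V W = (symclp (R_step V W))\<^sup>*\<^sup>*"

text \<open>Cyclic words: equivalence generated by cyclic permutation and W ~ W v vbar.\<close>
inductive cyc_step :: "nat \<Rightarrow> letter list \<Rightarrow> letter list \<Rightarrow> bool" for q where
  rot: "cyc_step q (x # xs) (xs @ [x])"
| ins: "\<lbrakk> W \<noteq> []; v \<in> alphabet q \<rbrakk> \<Longrightarrow> cyc_step q W (W @ [v, bar v])"

definition same_cyclic_word :: "nat \<Rightarrow> letter list \<Rightarrow> letter list \<Rightarrow> bool" where
  "same_cyclic_word q = (symclp (cyc_step q))\<^sup>*\<^sup>*"

end

theory Submission
  imports Defs
begin

(* Let n be the length of X and read X as an n-periodic bi-infinite word x; then X_i^p X_j^q'
   is the segment of length p n of x starting at i followed by the one of length q' n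
   starting at j.  The proof has three parts.
   1. Cyclic reduction (free reduction, then cancellation of inverse end letters) is an
      invariant of cyclic words up to rotation.
   2. Canonical form: cyclically reducing X_i^p X_j^q' cancels a maximal inverse overlap of
      length b at the junction X_j^q' X_i^p, which replaces (i, j) by the R-equivalent pair
      (i + b, j - b) (anti-diagonal generators), and then one of length d at the junction
      X_i^p X_j^q'; both are shorter than n since x is not inverse to a reflection of itself.
      The result canon_word is already cyclically reduced.
   3. Rigidity: if two canonical words with exponents q' < p, p >= 3, are rotations of each
      other, comparing their long periodic runs shows, by primitivity (n consecutive letters
      of x determine their position mod n), that their pairs are R-equivalent.
   The case p < q' reduces to q' < p by rotating the word.  The linking hypotheses of the
   theorem are used only to know that the four indices lie in I(X,X). *)

lemma bar_bar[simp]: "bar (bar v) = v" by (simp add: bar_def)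
lemma bar_neq[simp]: "bar v \<noteq> v" "v \<noteq> bar v" by (auto simp: bar_def prod_eq_iff)
lemma bar_eq_iff: "(bar a = b) = (a = bar b)" by (auto simp: bar_def prod_eq_iff)

lemma word_bar_word_bar[simp]: "word_bar (word_bar T) = T"
  by (simp add: word_bar_def rev_map[symmetric] comp_def)

section \<open>Free reduction\<close>

fun reduced :: "letter list \<Rightarrow> bool" where
  "reduced (a # b # l) = (b \<noteq> bar a \<and> reduced (b # l))"
| "reduced _ = True"

definition consL :: "letter \<Rightarrow> letter list \<Rightarrow> letter list" where
  "consL x l = (case l of [] \<Rightarrow> [x] | y # ys \<Rightarrow> if y = bar x then ys else x # l)"

definition snocR :: "letter list \<Rightarrow> letter \<Rightarrow> letter list" where
  "snocR l x = (if l \<noteq> [] \<and> last l = bar x then butlast l else l @ [x])"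

definition red :: "letter list \<Rightarrow> letter list" where
  "red W = foldr consL W []"

lemma red_Cons[simp]: "red (x # xs) = consL x (red xs)" by (simp add: red_def)
lemma red_Nil[simp]: "red [] = []" by (simp add: red_def)

lemma reduced_tl: "reduced (a # l) \<Longrightarrow> reduced l"
  by (cases l) auto

lemma reduced_consL: "reduced l \<Longrightarrow> reduced (consL x l)"
  by (cases l) (auto simp: consL_def dest: reduced_tl)

lemma reduced_red: "reduced (red W)"
  by (induction W) (auto intro: reduced_consL)

lemma reduced_last_pair: "reduced (m @ [u, w]) \<Longrightarrow> w \<noteq> bar u"
  by (induction m rule: reduced.induct) auto

text \<open>Reduction at the two ends commutes, so free reduction can also be computed from the left.\<close>
lemma consL_snocR_comm: "consL y (snocR l x) = snocR (consL y l) x"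
proof (cases l rule: rev_cases)
  case Nil then show ?thesis by (auto simp: consL_def snocR_def bar_eq_iff)
next
  case (snoc m w)
  show ?thesis
  proof (cases m)
    case Nil then show ?thesis using snoc by (auto simp: consL_def snocR_def bar_eq_iff)
  next
    case (Cons z m') then show ?thesis using snoc
      by (auto simp: consL_def snocR_def split: list.splits)
  qed
qed

lemma red_snoc: "red (xs @ [x]) = snocR (red xs) x"
proof (induction xs)
  case Nil then show ?case by (simp add: consL_def snocR_def)
next
  case (Cons y xs) then show ?case by (simp add: consL_snocR_comm)
qed

lemma snocR_snocR: "reduced l \<Longrightarrow> snocR (snocR l v) (bar v) = l"
proof (cases l rule: rev_cases)
  case Nil then show ?thesis by (auto simp: snocR_def)
next
  case (snoc m w)
  assume r: "reduced l"
  show ?thesis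
  proof (cases "w = bar v")
    case True
    show ?thesis
    proof (cases m rule: rev_cases)
      case Nil then show ?thesis using snoc True by (auto simp: snocR_def)
    next
      case (snoc m' u)
      have "w \<noteq> bar u" using r \<open>l = m @ [w]\<close> snoc reduced_last_pair[of m' u w] by auto
      then show ?thesis using snoc True \<open>l = m @ [w]\<close> by (auto simp: snocR_def bar_eq_iff butlast_append)
    qed
  next
    case False then show ?thesis using snoc by (auto simp: snocR_def butlast_append)
  qed
qed

lemma red_cancel_block: "red (Z @ T @ word_bar T) = red Z"
proof (induction T arbitrary: Z)
  case Nil then show ?case by (simp add: word_bar_def)
next
  case (Cons t T)
  have "Z @ (t # T) @ word_bar (t # T) = ((Z @ [t]) @ T @ word_bar T) @ [bar t]"
    by (simp add: word_bar_def)
  then have "red (Z @ (t # T) @ word_bar (t # T)) = snocR (red ((Z @ [t]) @ T @ word_bar T)) (bar t)"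
    by (simp only: red_snoc)
  also have "\<dots> = snocR (snocR (red Z) t) (bar t)"
    using Cons.IH[of "Z @ [t]"] by (simp only: red_snoc)
  also have "\<dots> = red Z" by (rule snocR_snocR[OF reduced_red])
  finally show ?case .
qed

lemma red_fix: "reduced l \<Longrightarrow> red l = l"
proof (induction l)
  case Nil then show ?case by simp
next
  case (Cons a l)
  then have "red l = l" using reduced_tl by blast
  then show ?case using Cons.prems by (cases l) (auto simp: consL_def)
qed

lemma reduced_iff_nth: "reduced l \<longleftrightarrow> (\<forall>t. Suc t < length l \<longrightarrow> l ! Suc t \<noteq> bar (l ! t))"
proof (induction l rule: reduced.induct)
  case (1 a b l)
  show ?case
  proof
    assume "reduced (a # b # l)"
    then have "b \<noteq> bar a" "\<forall>t. Suc t < length (b # l) \<longrightarrow> (b # l) ! Suc t \<noteq> bar ((b # l) ! t)"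
      using 1 by auto
    then show "\<forall>t. Suc t < length (a # b # l) \<longrightarrow> (a # b # l) ! Suc t \<noteq> bar ((a # b # l) ! t)"
      by (auto simp: nth_Cons split: nat.splits)
  next
    assume h: "\<forall>t. Suc t < length (a # b # l) \<longrightarrow> (a # b # l) ! Suc t \<noteq> bar ((a # b # l) ! t)"
    then have "b \<noteq> bar a" by (metis length_Cons nth_Cons_0 nth_Cons_Suc zero_less_Suc Suc_less_eq)
    moreover have "\<forall>t. Suc t < length (b # l) \<longrightarrow> (b # l) ! Suc t \<noteq> bar ((b # l) ! t)"
      using h by (metis Suc_less_eq length_Cons nth_Cons_Suc)
    ultimately show "reduced (a # b # l)" using 1 by simp
  qed
qed auto

section \<open>Cyclic reduction and rotations\<close>

definition rot_equiv :: "letter list \<Rightarrow> letter list \<Rightarrow> bool" where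
  "rot_equiv l l' \<longleftrightarrow> (\<exists>k. l' = rotate k l)"

lemma rot_equiv_refl[simp]: "rot_equiv l l"
  unfolding rot_equiv_def by (rule exI[of _ 0]) simp

lemma rot_equiv_trans: "rot_equiv a b \<Longrightarrow> rot_equiv b c \<Longrightarrow> rot_equiv a c"
  unfolding rot_equiv_def by (auto simp: rotate_rotate)

lemma rot_equiv_sym: "rot_equiv a b \<Longrightarrow> rot_equiv b a"
  unfolding rot_equiv_def
proof (elim exE)
  fix k assume b: "b = rotate k a"
  show "\<exists>k. a = rotate k b"
  proof (cases "length a")
    case 0 then show ?thesis using b by auto
  next
    case (Suc m)
    have "rotate (m * k) b = rotate (length a * k) a" using b Suc by (simp add: rotate_rotate algebra_simps)
    also have "\<dots> = a" by (subst rotate_conv_mod) simp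
    finally show ?thesis by metis
  qed
qed

lemma rot_equiv_rotate1: "rot_equiv (x # l) (l @ [x])"
  unfolding rot_equiv_def by (rule exI[of _ 1]) simp

fun trim_ends :: "letter list \<Rightarrow> letter list" where
  "trim_ends [] = []"
| "trim_ends (a # l) = (if l \<noteq> [] \<and> a = bar (last l) then trim_ends (butlast l) else a # l)"

lemma trim_ends_strip: "trim_ends (a # m @ [bar a]) = trim_ends m"
  by simp

lemma trim_ends_fix: "l = [] \<or> length l = 1 \<or> hd l \<noteq> bar (last l) \<Longrightarrow> trim_ends l = l"
  by (cases l) auto

lemma trim_ends_consL_snocR: "reduced l \<Longrightarrow> rot_equiv (trim_ends (consL x l)) (trim_ends (snocR l x))"
proof (cases l rule: rev_cases)
  case Nil then show ?thesis by (simp add: consL_def snocR_def)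
next
  case (snoc m w)
  assume r: "reduced l"
  show ?thesis
  proof (cases m)
    case Nil
    then show ?thesis using snoc rot_equiv_rotate1[of x "[w]"]
      by (cases "w = bar x") (auto simp: consL_def snocR_def bar_eq_iff)
  next
    case (Cons z m')
    have l: "l = z # m' @ [w]" using snoc Cons by simp
    have cl: "consL x l = (if z = bar x then m' @ [w] else x # z # m' @ [w])"
      using l by (simp add: consL_def)
    have sl: "snocR l x = (if w = bar x then z # m' else z # m' @ [w, x])"
      using l by (simp add: snocR_def butlast_append)
    consider "z = bar x" "w = bar x" | "z = bar x" "w \<noteq> bar x" | "z \<noteq> bar x" "w = bar x"
      | "z \<noteq> bar x" "w \<noteq> bar x" by blast
    then show ?thesis
    proof cases
      case 1
      have e1: "trim_ends (m' @ [w]) = m' @ [w]"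
      proof (cases m')
        case (Cons y m'')
        have "y \<noteq> bar z" using r l Cons by simp
        then show ?thesis using Cons 1 by (auto simp: bar_eq_iff)
      qed simp
      have e2: "trim_ends (z # m') = z # m'"
      proof (cases m' rule: rev_cases)
        case (snoc m'' y)
        have "w \<noteq> bar y" using r l snoc reduced_last_pair[of "z # m''" y w] by simp
        then show ?thesis using snoc 1 by (auto simp: bar_eq_iff)
      qed simp
      show ?thesis using cl sl 1 e1 e2 rot_equiv_rotate1[of z m'] rot_equiv_sym by simp
    next
      case 2
      have "z # m' @ [w, x] = bar x # (m' @ [w]) @ [bar (bar x)]" using 2 by simp
      then have "trim_ends (z # m' @ [w, x]) = trim_ends (m' @ [w])" by (metis trim_ends_strip)
      then show ?thesis using cl sl 2 by simp
    next
      case 3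
      have "x # z # m' @ [w] = x # (z # m') @ [bar x]" using 3 by simp
      then have "trim_ends (x # z # m' @ [w]) = trim_ends (z # m')" by (metis trim_ends_strip)
      then show ?thesis using cl sl 3 by simp
    next
      case 4
      have e1: "trim_ends (x # z # m' @ [w]) = x # z # m' @ [w]"
        using 4 by (intro trim_ends_fix) (auto simp: bar_eq_iff)
      have e2: "trim_ends (z # m' @ [w, x]) = z # m' @ [w, x]"
        using 4 by (intro trim_ends_fix) (auto simp: bar_eq_iff)
      show ?thesis using cl sl 4 e1 e2 rot_equiv_rotate1[of x "z # m' @ [w]"] by simp
    qed
  qed
qed

definition cycred :: "letter list \<Rightarrow> letter list" where
  "cycred W = trim_ends (red W)"

lemma cycred_rotate1: "rot_equiv (cycred (x # xs)) (cycred (xs @ [x]))"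
  unfolding cycred_def by (simp add: red_snoc trim_ends_consL_snocR reduced_red)

lemma cycred_cancel: "cycred (W @ [v, bar v]) = cycred W"
  using red_cancel_block[of W "[v]"] by (simp add: cycred_def word_bar_def)

lemma cycred_step: "cyc_step q W W' \<Longrightarrow> rot_equiv (cycred W) (cycred W')"
  by (induction rule: cyc_step.induct) (auto simp: cycred_rotate1 cycred_cancel)

lemma cycred_same_cyclic_word:
  "same_cyclic_word q W W' \<Longrightarrow> rot_equiv (cycred W) (cycred W')"
  unfolding same_cyclic_word_def
proof (induction rule: rtranclp_induct)
  case (step y z)
  then show ?case
    by (auto elim!: symclpE intro: rot_equiv_trans[OF _ rot_equiv_sym] rot_equiv_trans cycred_step)
qed simp

lemma cycred_swap: "rot_equiv (cycred (u @ w)) (cycred (w @ u))"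
proof (induction u arbitrary: w)
  case (Cons y u)
  have "rot_equiv (cycred ((y # u) @ w)) (cycred ((u @ w) @ [y]))"
    using cycred_rotate1[of y "u @ w"] by simp
  moreover have "rot_equiv (cycred (u @ (w @ [y]))) (cycred ((w @ [y]) @ u))" by (rule Cons)
  ultimately show ?case by (auto intro: rot_equiv_trans)
qed simp

lemma cycred_cancel_block: "rot_equiv (cycred (u @ T @ word_bar T @ w)) (cycred (u @ w))"
proof -
  have "rot_equiv (cycred (u @ T @ word_bar T @ w)) (cycred (w @ u @ T @ word_bar T))"
    using cycred_swap[of "u @ T @ word_bar T" w] by simp
  moreover have "cycred (w @ u @ T @ word_bar T) = cycred (w @ u)"
    using red_cancel_block[of "w @ u" T] by (simp add: cycred_def)
  moreover have "rot_equiv (cycred (w @ u)) (cycred (u @ w))" by (rule cycred_swap)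
  ultimately show ?thesis by (auto intro: rot_equiv_trans)
qed

lemma cycred_fix: "reduced l \<Longrightarrow> l = [] \<or> hd l \<noteq> bar (last l) \<Longrightarrow> cycred l = l"
  unfolding cycred_def by (simp add: red_fix, rule trim_ends_fix) auto

section \<open>A primitive word read periodically\<close>

text \<open>The letters x t (t an integer) of the bi-infinite periodic word X X X ..., and its
  segments.  Rotations and powers of X are segments.\<close>
locale prim_word =
  fixes X :: "letter list"
  assumes prim: "primitive X"
begin

abbreviation n where "n \<equiv> length X"

definition x :: "int \<Rightarrow> letter" where
  "x t = X ! nat (t mod int n)"

definition seg :: "int \<Rightarrow> nat \<Rightarrow> letter list" where
  "seg a L = map (\<lambda>u. x (a + int u)) [0..<L]"

lemma cyc_reduced: "cyc_reduced X" using prim by (simp add: primitive_def)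

lemma n_pos: "n > 0" using cyc_reduced by (simp add: cyc_reduced_def)

lemma x_cong: "a mod int n = b mod int n \<Longrightarrow> x a = x b"
  by (simp add: x_def)

lemma x_eqI: "a = b + int n * k \<Longrightarrow> x a = x b"
  by (rule x_cong) simp

lemma mod_eq_shift: "a mod int n = b mod int n \<Longrightarrow> \<exists>k. a = b + int n * k"
proof -
  assume "a mod int n = b mod int n"
  then have "int n dvd a - b" by (simp add: mod_eq_dvd_iff)
  then obtain k where "a - b = int n * k" by (auto simp: dvd_def)
  then show ?thesis by (intro exI[of _ k]) simp
qed

lemma seg_length[simp]: "length (seg a L) = L" by (simp add: seg_def)

lemma seg_nth[simp]: "u < L \<Longrightarrow> seg a L ! u = x (a + int u)" by (simp add: seg_def)

lemma seg_append: "seg a (L1 + L2) = seg a L1 @ seg (a + int L1) L2"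
  by (rule nth_equalityI) (auto simp: nth_append algebra_simps)

lemma seg_cong: "a mod int n = b mod int n \<Longrightarrow> seg a L = seg b L"
proof (rule nth_equalityI)
  fix u assume "a mod int n = b mod int n" "u < length (seg a L)"
  then have "(a + int u) mod int n = (b + int u) mod int n" by (metis mod_add_left_eq)
  then show "seg a L ! u = seg b L ! u" using \<open>u < length (seg a L)\<close> by (auto intro!: x_cong)
qed simp

lemma seg_add_n: "seg (a + int n * k) L = seg a L"
  by (rule seg_cong) simp

lemma nat_mod_Suc: "Suc (nat (a mod int n)) mod n = nat ((a + 1) mod int n)"
proof -
  have "int (nat (a mod int n)) = a mod int n" using n_pos by simp
  then have "int ((nat (a mod int n) + 1) mod n) = (a mod int n + 1) mod int n"
    by (simp only: zmod_int of_nat_add of_nat_1)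
  also have "\<dots> = (a + 1) mod int n" by (simp add: mod_add_left_eq)
  finally show ?thesis by (metis Suc_eq_plus1 nat_int)
qed

lemma nat_mod_less: "nat (a mod int n) < n" using n_pos by (simp add: nat_less_iff)

lemma x_reduced: "x t \<noteq> bar (x (t + 1))"
proof -
  let ?i = "nat (t mod int n)"
  have "X ! ?i \<noteq> bar (X ! (Suc ?i mod n))"
    using cyc_reduced nat_mod_less by (simp add: cyc_reduced_def)
  then show ?thesis by (simp add: x_def nat_mod_Suc)
qed

lemma x_reduced': "x (t + 1) \<noteq> bar (x t)"
  using x_reduced[of t] by (auto simp: bar_eq_iff)

lemma rotate_seg: "rotate i X = seg (int i) n"
proof (rule nth_equalityI)
  fix u assume "u < length (rotate i X)"
  then have u: "u < n" by simp
  have "nat ((int i + int u) mod int n) = (u + i) mod n"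
    by (metis add.commute nat_int of_nat_add zmod_int)
  then show "rotate i X ! u = seg (int i) n ! u" using u n_pos by (simp add: nth_rotate x_def add.commute)
qed simp

lemma wpow_seg: "wpow (seg a n) p = seg a (p * n)"
proof (induction p)
  case 0 then show ?case by (simp add: wpow_def seg_def)
next
  case (Suc p)
  have "seg a (Suc p * n) = seg a n @ seg (a + int n) (p * n)"
    using seg_append[of a n "p * n"] by simp
  also have "\<dots> = seg a n @ seg a (p * n)" using seg_add_n[of a 1] by simp
  finally show ?case using Suc by (simp add: wpow_def)
qed

lemma rotate_seg_periods: "rotate s (seg a (k * n)) = seg (a + int s) (k * n)"
proof (rule nth_equalityI)
  fix t assume "t < length (rotate s (seg a (k * n)))"
  then have t: "t < k * n" by simp
  then have "(s + t) mod (k * n) < k * n" by (metis mod_less_divisor not_less0 gr_zeroI)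
  then have "rotate s (seg a (k * n)) ! t = x (a + int ((s + t) mod (k * n)))"
    using t by (simp add: nth_rotate)
  also have "\<dots> = x (a + int s + int t)"
  proof (rule x_cong)
    have "(s + t) mod (k * n) mod n = (s + t) mod n" by (simp add: mod_mod_cancel)
    then have "int ((s + t) mod (k * n)) mod int n = (int s + int t) mod int n"
      by (metis of_nat_add of_nat_mod)
    then show "(a + int ((s + t) mod (k * n))) mod int n = (a + int s + int t) mod int n"
      by (metis add.assoc mod_add_right_eq)
  qed
  finally show "rotate s (seg a (k * n)) ! t = seg (a + int s) (k * n) ! t" using t by simp
qed simp

lemma no_small_period:
  assumes period: "\<And>t. x (t + int k) = x t" and k: "0 < k" "k < n"
  shows False
proof -
  have "seg (int k) n = seg 0 n"
    by (rule nth_equalityI) (auto simp: period[of "int _", simplified add.commute])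
  then have r: "rotate k X = X" using rotate_seg[of k] rotate_seg[of 0] by simp
  have "rotate k X = drop k X @ take k X" using k by (simp add: rotate_drop_take)
  then have e: "take k X @ drop k X = drop k X @ take k X" using r by simp
  have "take k X \<noteq> []" "drop k X \<noteq> []" using k by auto
  from comm_append_is_replicate[OF this e]
  obtain m zs where "m > 1" "concat (replicate m zs) = take k X @ drop k X" by blast
  then have "X = wpow zs m" "m \<ge> 2" using e by (auto simp: wpow_def)
  then show False using prim by (auto simp: primitive_def)
qed

lemma phase_unique:
  assumes eq: "\<And>u. u < n \<Longrightarrow> x (a + int u) = x (b + int u)"
  shows "a mod int n = b mod int n"
proof -
  define k where "k = nat ((b - a) mod int n)"
  have kk: "int k = (b - a) mod int n" using n_pos by (simp add: k_def)
  have period: "x (t + int k) = x t" for t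
  proof -
    define u where "u = nat ((t - a) mod int n)"
    have uu: "int u = (t - a) mod int n" using n_pos by (simp add: u_def)
    have "u < n" using nat_mod_less by (simp add: u_def)
    have "x t = x (a + int u)"
      by (rule x_cong) (simp add: uu mod_add_right_eq)
    also have "\<dots> = x (b + int u)" using eq \<open>u < n\<close> by blast
    also have "\<dots> = x (t + int k)"
    proof (rule x_cong)
      have "(b + int u) mod int n = (b + (t - a)) mod int n" by (simp add: uu mod_add_right_eq)
      moreover have "(t + int k) mod int n = (t + (b - a)) mod int n" by (simp add: kk mod_add_right_eq)
      ultimately show "(b + int u) mod int n = (t + int k) mod int n" by (simp add: algebra_simps)
    qed
    finally show ?thesis by simp
  qed
  have "k < n" using nat_mod_less by (simp add: k_def)
  then have "k = 0" using no_small_period[OF period] by blast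
  then have "int n dvd b - a" using kk by (simp add: dvd_eq_mod_eq_0)
  then show ?thesis by (simp add: mod_eq_dvd_iff dvd_diff_commute)
qed

lemma seg_phase_unique:
  assumes "seg a L = seg b L" "L \<ge> n"
  shows "a mod int n = b mod int n"
proof (rule phase_unique)
  fix u assume "u < n"
  then have "seg a L ! u = seg b L ! u" using assms by simp
  then show "x (a + int u) = x (b + int u)" using \<open>u < n\<close> assms(2) by simp
qed

text \<open>inv_overlap i j m: the m letters of x from position j on are the inverse of the
  m letters ending just before position i; this is the amount of cancellation at a
  junction of a ray of x ending before i with a ray starting at j.\<close>
definition inv_overlap :: "int \<Rightarrow> int \<Rightarrow> nat \<Rightarrow> bool" where
  "inv_overlap i j m \<longleftrightarrow> (\<forall>t<m. x (j + int t) = bar (x (i - 1 - int t)))"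

lemma inv_overlap_iff: "inv_overlap i j m \<longleftrightarrow> seg j m = word_bar (seg (i - int m) m)"
proof -
  have "word_bar (seg (i - int m) m) ! t = bar (x (i - 1 - int t))" if "t < m" for t
    using that by (simp add: word_bar_def rev_nth of_nat_diff algebra_simps)
  then show ?thesis unfolding inv_overlap_def
    by (auto simp: list_eq_iff_nth_eq word_bar_def)
qed

text \<open>Overlaps are shorter than n: otherwise x would be inverse to a reflection of itself,
  and the centre of the reflection would give a letter equal or adjacent to its inverse.\<close>
lemma inv_overlap_less:
  assumes "inv_overlap i j m"
  shows "m < n"
proof (rule ccontr)
  assume "\<not> m < n"
  define c where "c = i + j - 1"
  have all: "x y = bar (x (c - y))" for y
  proof -
    define t where "t = nat ((y - j) mod int n)"
    have tt: "int t = (y - j) mod int n" using n_pos by (simp add: t_def)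
    have "t < n" using nat_mod_less by (simp add: t_def)
    then have tm: "t < m" using \<open>\<not> m < n\<close> by linarith
    have "x y = x (j + int t)" by (rule x_cong) (simp add: tt mod_add_right_eq)
    also have "\<dots> = bar (x (i - 1 - int t))" using assms tm by (simp add: inv_overlap_def)
    also have "x (i - 1 - int t) = x (c - y)"
    proof (rule x_cong)
      have "(i - 1 - int t) mod int n = (i - 1 - (y - j)) mod int n" by (simp add: tt mod_diff_right_eq)
      then show "(i - 1 - int t) mod int n = (c - y) mod int n" by (simp add: c_def algebra_simps)
    qed
    finally show ?thesis .
  qed
  show False
  proof (cases "even c")
    case True
    then have "c - c div 2 = c div 2" by presburger
    then show False using all[of "c div 2"] by (metis bar_neq(2))
  next
    case False
    then have h: "c - c div 2 = c div 2 + 1" by presburger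
    show False using all[of "c div 2"] x_reduced[of "c div 2"] unfolding h by simp
  qed
qed

lemma maximal_inv_overlap: "\<exists>m<n. inv_overlap i j m \<and> \<not> inv_overlap i j (m + 1)"
proof -
  have "\<not> inv_overlap i j n" using inv_overlap_less by blast
  moreover have "inv_overlap i j 0" by (simp add: inv_overlap_def)
  ultimately obtain m where "m < n" "\<forall>m'\<le>m. inv_overlap i j m'" "\<not> inv_overlap i j (Suc m)"
    using ex_least_nat_less[of "\<lambda>m. \<not> inv_overlap i j m" n] by auto
  then show ?thesis by auto
qed

lemma inv_overlap_stop:
  "inv_overlap i j m \<Longrightarrow> \<not> inv_overlap i j (m + 1) \<Longrightarrow> x (j + int m) \<noteq> bar (x (i - 1 - int m))"
  by (auto simp: inv_overlap_def less_Suc_eq)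

lemma inv_overlap_last:
  "inv_overlap i j d \<Longrightarrow> d \<noteq> 0 \<Longrightarrow> x (j + int d - 1) = bar (x (i - int d))"
  unfolding inv_overlap_def by (drule spec[of _ "d - 1"]) (simp add: of_nat_diff algebra_simps)

section \<open>The relation R(X,X) on integer pairs\<close>

definition Req :: "int \<times> int \<Rightarrow> int \<times> int \<Rightarrow> bool" where
  "Req a b \<longleftrightarrow> R_equiv X X (nat (fst a mod int n), nat (snd a mod int n))
                              (nat (fst b mod int n), nat (snd b mod int n))"

lemma R_equiv_sym: "R_equiv V W a b \<Longrightarrow> R_equiv V W b a"
  unfolding R_equiv_def
proof (induction rule: rtranclp_induct)
  case (step y z)
  then have "symclp (R_step V W) z y" by (auto simp: symclp_def)
  then show ?case using step(3) by (rule converse_rtranclp_into_rtranclp)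
qed simp

lemma Req_refl[simp]: "Req a a" by (simp add: Req_def R_equiv_def)
lemma Req_sym: "Req a b \<Longrightarrow> Req b a" by (simp add: Req_def R_equiv_sym)
lemma Req_trans: "Req a b \<Longrightarrow> Req b c \<Longrightarrow> Req a c"
  unfolding Req_def R_equiv_def by (rule rtranclp_trans)

lemma Req_cong: "fst a mod int n = fst a' mod int n \<Longrightarrow> snd a mod int n = snd a' mod int n \<Longrightarrow>
   fst b mod int n = fst b' mod int n \<Longrightarrow> snd b mod int n = snd b' mod int n \<Longrightarrow> Req a b = Req a' b'"
  by (simp add: Req_def)

lemma Req_diag: "x a = x b \<Longrightarrow> Req (a, b) (a + 1, b + 1)"
proof -
  assume "x a = x b"
  then have "R_step X X (nat (a mod int n), nat (b mod int n))
     (Suc (nat (a mod int n)) mod n, Suc (nat (b mod int n)) mod n)"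
    using R_step.diag[OF nat_mod_less nat_mod_less] by (simp add: x_def)
  then show ?thesis unfolding Req_def R_equiv_def
    by (auto intro!: r_into_rtranclp simp: symclp_def nat_mod_Suc)
qed

lemma Req_anti: "x a = bar (x b) \<Longrightarrow> Req (a + 1, b) (a, b + 1)"
proof -
  assume "x a = bar (x b)"
  then have "R_step X X (Suc (nat (a mod int n)) mod n, nat (b mod int n))
     (nat (a mod int n), Suc (nat (b mod int n)) mod n)"
    using R_step.anti[OF nat_mod_less nat_mod_less] by (simp add: x_def)
  then show ?thesis unfolding Req_def R_equiv_def
    by (auto intro!: r_into_rtranclp simp: symclp_def nat_mod_Suc)
qed

lemma Req_diag_chain:
  "(\<And>u. u < s \<Longrightarrow> x (a + int u) = x (b + int u)) \<Longrightarrow> Req (a, b) (a + int s, b + int s)"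
proof (induction s)
  case (Suc s)
  then have "Req (a, b) (a + int s, b + int s)" by simp
  moreover have "Req (a + int s, b + int s) (a + int s + 1, b + int s + 1)"
    using Suc.prems[of s] by (intro Req_diag) simp
  ultimately show ?case by (auto intro: Req_trans simp: algebra_simps)
qed simp

lemma Req_inv_overlap: "inv_overlap b a s \<Longrightarrow> Req (a, b) (a + int s, b - int s)"
proof (induction s)
  case (Suc s)
  then have "Req (a, b) (a + int s, b - int s)" by (simp add: inv_overlap_def)
  moreover have "Req (a + int s + 1, b - int s - 1) (a + int s, b - int s - 1 + 1)"
    using Suc.prems by (intro Req_anti) (simp add: inv_overlap_def algebra_simps)
  ultimately show ?case by (auto intro: Req_trans Req_sym simp: algebra_simps)
qed simp

lemma Req_diagonal:
  assumes "a mod int n = b mod int n" "a' mod int n = b' mod int n"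
  shows "Req (a, b) (a', b')"
proof -
  define k where "k = nat ((a' - a) mod int n)"
  have "(a + int k) mod int n = a' mod int n"
    using n_pos by (simp add: k_def mod_add_right_eq)
  moreover have "Req (a, a) (a + int k, a + int k)" by (rule Req_diag_chain) simp
  ultimately have "Req (a, a) (a', a')" using Req_cong by (metis fst_conv snd_conv)
  then show ?thesis using Req_cong assms by (metis fst_conv snd_conv)
qed

lemma R_step_swap: "R_step X X a b \<Longrightarrow> symclp (R_step X X) (snd a, fst a) (snd b, fst b)"
proof (induction rule: R_step.induct)
  case (diag j k)
  then show ?case using R_step.diag[where j=k and k=j] by (simp add: symclp_def)
next
  case (anti j k)
  then show ?case using R_step.anti[where j=k and k=j] by (simp add: symclp_def bar_eq_iff)
qed

lemma Req_swap: "Req (a, b) (c, d) \<Longrightarrow> Req (b, a) (d, c)"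
proof -
  have "R_equiv X X u v \<Longrightarrow> R_equiv X X (snd u, fst u) (snd v, fst v)" for u v
    unfolding R_equiv_def
  proof (induction rule: rtranclp_induct)
    case (step y z)
    have "symclp (R_step X X) (snd y, fst y) (snd z, fst z)"
      using step(2) by (auto simp: symclp_def dest: R_step_swap)
    with step(3) show ?case by (rule rtranclp.rtrancl_into_rtrancl)
  qed simp
  then show "Req (a, b) (c, d) \<Longrightarrow> Req (b, a) (d, c)" unfolding Req_def by fastforce
qed

section \<open>Canonical cyclically reduced form of X_i^p X_j^q'\<close>

lemma seg_split_start: "b \<le> L \<Longrightarrow> seg a L = seg a b @ seg (a + int b) (L - b)"
  using seg_append[of a b "L - b"] by simp

lemma seg_split_period: "b \<le> k * n \<Longrightarrow> seg a (k * n) = seg a (k * n - b) @ seg (a - int b) b"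
proof -
  assume b: "b \<le> k * n"
  have "seg a (k * n) = seg a (k * n - b) @ seg (a + int (k * n - b)) b"
    using seg_append[of a "k * n - b" b] b by simp
  moreover have "a + int (k * n - b) = (a - int b) + int n * int k"
    using b by (simp add: of_nat_diff algebra_simps)
  ultimately show ?thesis using seg_add_n by simp
qed

text \<open>X_\<phi>^p X_\<psi>^q' with an inverse overlap of length d at the junction cancelled.\<close>
definition canon_word :: "nat \<Rightarrow> nat \<Rightarrow> int \<Rightarrow> int \<Rightarrow> nat \<Rightarrow> letter list" where
  "canon_word p q' \<phi> \<psi> d = seg \<phi> (p * n - d) @ seg (\<psi> + int d) (q' * n - d)"

lemma canon_word_length: "length (canon_word p q' \<phi> \<psi> d) = (p * n - d) + (q' * n - d)"
  by (simp add: canon_word_def)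

lemma canon_word_nth_left: "t < p * n - d \<Longrightarrow> canon_word p q' \<phi> \<psi> d ! t = x (\<phi> + int t)"
  by (simp add: canon_word_def nth_append)

lemma canon_word_nth_right:
  "t < q' * n - d \<Longrightarrow> canon_word p q' \<phi> \<psi> d ! (p * n - d + t) = x (\<psi> + int d + int t)"
  by (simp add: canon_word_def nth_append)

lemma period_bounds:
  assumes "k \<ge> 1" "d < n"
  shows "d < k * n" "int (k * n - d) = int n * int k - int d"
proof -
  have "1 * n \<le> k * n" using assms(1) by (rule mult_le_mono1)
  then show "d < k * n" using assms(2) by linarith
  then show "int (k * n - d) = int n * int k - int d" by (simp add: of_nat_diff)
qed

lemma cancel_outer_overlap:
  assumes "p \<ge> 1" "q' \<ge> 1" and b: "inv_overlap j i b" "b < n"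
  shows "rot_equiv (cycred (seg i (p * n) @ seg j (q' * n)))
                   (cycred (seg (i + int b) (p * n) @ seg (j - int b) (q' * n)))"
proof -
  have bp: "b \<le> p * n" and bq: "b \<le> q' * n" using period_bounds(1)[OF assms(1) b(2)] period_bounds(1)[OF assms(2) b(2)] by simp_all
  define T where "T = seg (j - int b) b"
  have sib: "seg i b = word_bar T" using b(1) by (simp add: inv_overlap_iff T_def)
  define R where "R = seg (i + int b) (p * n - b) @ seg j (q' * n - b)"
  have "seg i (p * n) @ seg j (q' * n) = seg i b @ R @ T"
    using seg_split_start[OF bp, of i] seg_split_period[OF bq, of j] by (simp add: R_def T_def)
  then have "rot_equiv (cycred (seg i (p * n) @ seg j (q' * n))) (cycred (R @ T @ word_bar T @ []))"
    using cycred_swap[of "seg i b" "R @ T"] sib by simp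
  then have left: "rot_equiv (cycred (seg i (p * n) @ seg j (q' * n))) (cycred R)"
    using cycred_cancel_block[of R T "[]"] by (auto intro: rot_equiv_trans)
  have "seg (i + int b) (p * n) @ seg (j - int b) (q' * n) =
        seg (i + int b) (p * n - b) @ word_bar T @ word_bar (word_bar T) @ seg j (q' * n - b)"
    using seg_split_period[OF bp, of "i + int b"] seg_split_start[OF bq, of "j - int b"] sib
    by (simp add: T_def)
  then have "rot_equiv (cycred (seg (i + int b) (p * n) @ seg (j - int b) (q' * n))) (cycred R)"
    using cycred_cancel_block[of "seg (i + int b) (p * n - b)" "word_bar T"] by (simp add: R_def)
  then show ?thesis using left by (blast intro: rot_equiv_trans rot_equiv_sym)
qed

lemma cancel_inner_overlap:
  assumes "p \<ge> 1" "q' \<ge> 1" and d: "inv_overlap \<phi> \<psi> d" "d < n"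
  shows "rot_equiv (cycred (seg \<phi> (p * n) @ seg \<psi> (q' * n))) (cycred (canon_word p q' \<phi> \<psi> d))"
proof -
  have dp: "d \<le> p * n" and dq: "d \<le> q' * n" using period_bounds(1)[OF assms(1) d(2)] period_bounds(1)[OF assms(2) d(2)] by simp_all
  have "seg \<psi> d = word_bar (seg (\<phi> - int d) d)" using d(1) by (simp add: inv_overlap_iff)
  then have "seg \<phi> (p * n) @ seg \<psi> (q' * n) = seg \<phi> (p * n - d) @ seg (\<phi> - int d) d @
      word_bar (seg (\<phi> - int d) d) @ seg (\<psi> + int d) (q' * n - d)"
    using seg_split_period[OF dp, of \<phi>] seg_split_start[OF dq, of \<psi>] by simp
  then show ?thesis
    using cycred_cancel_block[of "seg \<phi> (p * n - d)" "seg (\<phi> - int d) d"] by (simp add: canon_word_def)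
qed

lemma canon_word_reduced:
  assumes "p \<ge> 1" "q' \<ge> 1" and d: "inv_overlap \<phi> \<psi> d" "\<not> inv_overlap \<phi> \<psi> (d + 1)" "d < n"
  shows "reduced (canon_word p q' \<phi> \<psi> d)"
  unfolding reduced_iff_nth canon_word_length
proof (intro allI impI)
  let ?c = "canon_word p q' \<phi> \<psi> d"
  define P where "P = p * n - d"
  have P: "P \<ge> 1" "int P = int n * int p - int d"
    using period_bounds[OF assms(1) d(3)] by (simp_all add: P_def)
  fix t assume t: "Suc t < p * n - d + (q' * n - d)"
  consider "Suc t < P" | "Suc t = P" | "P < Suc t" by linarith
  then show "?c ! Suc t \<noteq> bar (?c ! t)"
  proof cases
    case 1
    then show ?thesis using x_reduced'[of "\<phi> + int t"]
      by (simp add: P_def canon_word_nth_left algebra_simps)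
  next
    case 2
    have "?c ! t = x (\<phi> + int t)" using 2 by (simp add: P_def canon_word_nth_left)
    also have "\<dots> = x (\<phi> - 1 - int d)"
      by (rule x_eqI[where k = "int p"]) (use 2 P in \<open>simp add: algebra_simps\<close>)
    finally have "?c ! t = x (\<phi> - 1 - int d)" .
    moreover have "?c ! Suc t = x (\<psi> + int d)"
      using 2 t canon_word_nth_right[of 0] by (simp add: P_def)
    ultimately show ?thesis using inv_overlap_stop[OF d(1,2)] by simp
  next
    case 3
    define u where "u = t - P"
    have "t = P + u" "Suc u < q' * n - d" using 3 t by (simp_all add: u_def P_def)
    then show ?thesis using x_reduced'[of "\<psi> + int d + int u"]
      canon_word_nth_right[of u] canon_word_nth_right[of "Suc u"]
      by (simp add: P_def algebra_simps)
  qed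
qed

lemma canon_word_cycred:
  assumes "p \<ge> 1" "q' \<ge> 1" and d: "inv_overlap \<phi> \<psi> d" "\<not> inv_overlap \<phi> \<psi> (d + 1)" "d < n"
    and outer: "\<not> inv_overlap \<psi> \<phi> 1"
  shows "cycred (canon_word p q' \<phi> \<psi> d) = canon_word p q' \<phi> \<psi> d"
proof (rule cycred_fix[OF canon_word_reduced[OF assms(1-5)]])
  let ?c = "canon_word p q' \<phi> \<psi> d"
  define Q where "Q = q' * n - d"
  have P: "p * n - d \<ge> 1" and Q: "Q \<ge> 1" "int Q = int n * int q' - int d"
    using period_bounds[OF assms(1) d(3)] period_bounds[OF assms(2) d(3)] by (simp_all add: Q_def)
  have ne: "?c \<noteq> []" using P by (metis canon_word_length length_0_conv add_is_0 not_one_le_zero)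
  then have hd: "hd ?c = x \<phi>" using P canon_word_nth_left[of 0] by (simp add: hd_conv_nth)
  have "last ?c = ?c ! (p * n - d + (Q - 1))"
    using ne Q by (simp add: last_conv_nth canon_word_length Q_def)
  also have "\<dots> = x (\<psi> + int d + int (Q - 1))" using Q canon_word_nth_right[of "Q - 1"] by (simp add: Q_def)
  also have "\<dots> = x (\<psi> - 1)"
    by (rule x_eqI[where k = "int q'"]) (use Q in \<open>simp add: of_nat_diff algebra_simps\<close>)
  finally show "?c = [] \<or> hd ?c \<noteq> bar (last ?c)"
    using outer hd by (simp add: inv_overlap_def)
qed

lemma canonical_form:
  assumes "p \<ge> 1" "q' \<ge> 1"
  shows "\<exists>\<phi> \<psi> d. Req (i, j) (\<phi>, \<psi>) \<and> inv_overlap \<phi> \<psi> d \<and> d < n \<and>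
     rot_equiv (cycred (seg i (p * n) @ seg j (q' * n))) (canon_word p q' \<phi> \<psi> d)"
proof -
  obtain b where b: "b < n" "inv_overlap j i b" "\<not> inv_overlap j i (b + 1)"
    using maximal_inv_overlap by blast
  define \<phi> where "\<phi> = i + int b"
  define \<psi> where "\<psi> = j - int b"
  obtain d where d: "d < n" "inv_overlap \<phi> \<psi> d" "\<not> inv_overlap \<phi> \<psi> (d + 1)"
    using maximal_inv_overlap by blast
  have "\<not> inv_overlap \<psi> \<phi> 1"
    using inv_overlap_stop[OF b(2,3)] by (simp add: inv_overlap_def \<phi>_def \<psi>_def algebra_simps)
  then have "cycred (canon_word p q' \<phi> \<psi> d) = canon_word p q' \<phi> \<psi> d"
    using canon_word_cycred assms d by blast
  moreover have "rot_equiv (cycred (seg i (p * n) @ seg j (q' * n)))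
                           (cycred (canon_word p q' \<phi> \<psi> d))"
    using cancel_outer_overlap[OF assms b(2,1)] cancel_inner_overlap[OF assms d(2,1)]
    unfolding \<phi>_def \<psi>_def by (rule rot_equiv_trans)
  moreover have "Req (i, j) (\<phi>, \<psi>)"
    using b(2) by (simp add: Req_inv_overlap \<phi>_def \<psi>_def)
  ultimately show ?thesis using d by metis
qed

end

section \<open>Rigidity of canonical words under rotation\<close>

text \<open>C consists of a run of length P of x starting at \<phi> and a run of length Q starting at
  \<psi> + d.\<close>
locale rotated_canon = prim_word +
  fixes p q' d :: nat and \<phi> \<psi> \<phi>' \<psi>' :: int and s :: nat
  assumes p_pos: "p \<ge> 1" and q'_pos: "q' \<ge> 1" and d_less: "d < n"
    and overlap: "inv_overlap \<phi> \<psi> d"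
    and rotation: "rotate s (canon_word p q' \<phi> \<psi> d) = canon_word p q' \<phi>' \<psi>' d"
begin

definition P where "P = p * n - d"
definition Q where "Q = q' * n - d"

abbreviation C where "C \<equiv> canon_word p q' \<phi> \<psi> d"
abbreviation C' where "C' \<equiv> canon_word p q' \<phi>' \<psi>' d"

lemma P_int: "int P = int n * int p - int d"
  unfolding P_def by (rule period_bounds(2)[OF p_pos d_less])

lemma Q_int: "int Q = int n * int q' - int d"
  unfolding Q_def by (rule period_bounds(2)[OF q'_pos d_less])

lemma d_plus_P: "d + P = p * n"
  using period_bounds(1)[OF p_pos d_less] by (simp add: P_def)

lemma d_plus_Q: "d + Q = q' * n"
  using period_bounds(1)[OF q'_pos d_less] by (simp add: Q_def)

lemma n_le_d_plus_Q: "n \<le> d + Q"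
  using d_plus_Q mult_le_mono1[OF q'_pos, of n] by simp

lemma n_le_d_plus_P: "n \<le> d + P"
  using d_plus_P mult_le_mono1[OF p_pos, of n] by simp

lemma Q_pos: "Q \<ge> 1"
  using n_le_d_plus_Q d_less by linarith

lemma x_shift_P: "x (a + int P) = x (a - int d)"
  by (rule x_eqI[where k = "int p"]) (simp add: P_int algebra_simps)

lemma x_shift_Q: "x (a + int Q) = x (a - int d)"
  by (rule x_eqI[where k = "int q'"]) (simp add: Q_int algebra_simps)

lemma C_left: "t < P \<Longrightarrow> C ! t = x (\<phi> + int t)"
  unfolding P_def by (rule canon_word_nth_left)

lemma C_right: "t < Q \<Longrightarrow> C ! (P + t) = x (\<psi> + int d + int t)"
  unfolding P_def Q_def by (rule canon_word_nth_right)

lemma C'_left: "t < P \<Longrightarrow> C' ! t = x (\<phi>' + int t)"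
  unfolding P_def by (rule canon_word_nth_left)

lemma C'_right: "t < Q \<Longrightarrow> C' ! (P + t) = x (\<psi>' + int d + int t)"
  unfolding P_def Q_def by (rule canon_word_nth_right)

lemma C'_nth: "t < P + Q \<Longrightarrow> C' ! t = C ! ((t + s) mod (P + Q))"
  unfolding rotation[symmetric] by (simp add: nth_rotate canon_word_length add.commute P_def Q_def)

text \<open>If the first run of C is diagonal (\<phi> = \<psi> mod n) and nothing cancelled, C is a
  segment of whole periods; then so is its rotation C', whose pair is diagonal as well.\<close>
lemma diagonal_rigid:
  assumes d0: "d = 0" and diag: "\<phi> mod int n = \<psi> mod int n"
  shows "Req (\<phi>, \<psi>) (\<phi>', \<psi>')"
proof -
  have nQ: "n \<le> Q" and nP: "n \<le> P" using n_le_d_plus_Q n_le_d_plus_P d0 by simp_all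
  have "int P = int n * int p" using P_int d0 by simp
  then have "seg \<psi> Q = seg (\<phi> + int P) Q" by (intro seg_cong) (simp add: diag)
  moreover have "C = seg \<phi> P @ seg \<psi> Q" unfolding canon_word_def P_def Q_def using d0 by simp
  ultimately have "C = seg \<phi> P @ seg (\<phi> + int P) Q" by simp
  also have "\<dots> = seg \<phi> ((p + q') * n)"
    using d_plus_P d_plus_Q d0 seg_append[of \<phi> P Q] by (simp add: algebra_simps)
  finally have C': "C' = seg (\<phi> + int s) ((p + q') * n)"
    using rotation rotate_seg_periods by metis
  have "\<phi>' mod int n = \<psi>' mod int n"
  proof (rule phase_unique)
    fix u assume u: "u < n"
    have len: "P + u < (p + q') * n" "u < (p + q') * n"
      using u nQ d_plus_P d_plus_Q unfolding d0 distrib_right by linarith+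
    have "x (\<phi>' + int u) = x (\<phi> + int s + int u)"
      using C'_left[of u] u nP C' len by simp
    also have "\<dots> = x (\<phi> + int s + int u + int P)" using x_shift_P d0 by simp
    also have "\<dots> = x (\<psi>' + int u)"
      using C'_right[of u] u nQ C' len d0 by (simp add: algebra_simps)
    finally show "x (\<phi>' + int u) = x (\<psi>' + int u)" .
  qed
  then show ?thesis by (rule Req_diagonal[OF diag])
qed

text \<open>Aligned case: the first n letters of C' lie inside the first run of C, which fixes
  the phase of \<phi>'.\<close>
lemma aligned_phase:
  assumes "s + n \<le> P"
  shows "(\<phi> + int s) mod int n = \<phi>' mod int n"
proof (rule phase_unique)
  fix u assume "u < n"
  then have u: "u + s < P" "u < P" using assms by linarith+
  then have "x (\<phi>' + int u) = C ! ((u + s) mod (P + Q))" using C'_left C'_nth[of u] by simp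
  also have "\<dots> = x (\<phi> + int (u + s))" using u C_left by simp
  finally show "x (\<phi> + int s + int u) = x (\<phi>' + int u)" by (simp add: algebra_simps)
qed

text \<open>The start of the second run of C lands inside the first run of C', so it continues
  the first run of C across the junction.\<close>
lemma aligned_junction:
  assumes "s + n \<le> P" "u < s" "u < Q"
  shows "x (\<psi> + int d + int u) = x (\<phi> - int d + int u)"
proof -
  obtain k where k: "\<phi>' = \<phi> + int s + int n * k"
    using mod_eq_shift aligned_phase[OF assms(1)] by metis
  have j: "P - s + u < P" "(P - s + u + s) mod (P + Q) = P + u" "s \<le> P" using assms by auto
  have "x (\<psi> + int d + int u) = C ! (P + u)" using C_right assms(3) by simp
  also have "\<dots> = C' ! (P - s + u)" using C'_nth[of "P - s + u"] j by simp
  also have "\<dots> = x (\<phi>' + int (P - s + u))" using C'_left j by simp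
  also have "\<dots> = x (\<phi> + int u + int P)"
    by (rule x_eqI[where k = k]) (use j k in \<open>simp add: of_nat_diff algebra_simps\<close>)
  also have "\<dots> = x (\<phi> - int d + int u)" using x_shift_P[of "\<phi> + int u"] by (simp add: algebra_simps)
  finally show ?thesis .
qed

text \<open>A nontrivial aligned rotation is impossible if an overlap was cancelled: the two
  letters around the cancelled junction would be mutually inverse.\<close>
lemma aligned_no_overlap:
  assumes "s + n \<le> P" "s \<noteq> 0"
  shows "d = 0"
proof (rule ccontr)
  assume "d \<noteq> 0"
  have "x (\<psi> + int d) = x (\<phi> - int d)" using aligned_junction[OF assms(1), of 0] assms(2) Q_pos by simp
  moreover have "x (\<psi> + int d - 1) = bar (x (\<phi> - int d))" by (rule inv_overlap_last[OF overlap \<open>d \<noteq> 0\<close>])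
  ultimately show False using x_reduced[of "\<psi> + int d - 1"] by simp
qed

text \<open>The three aligned subcases: the trivial rotation, ...\<close>
lemma aligned_no_shift:
  assumes "s = 0" "n \<le> P" and overlap': "inv_overlap \<phi>' \<psi>' d"
  shows "Req (\<phi>, \<psi>) (\<phi>', \<psi>')"
proof -
  have phase: "\<phi> mod int n = \<phi>' mod int n" using aligned_phase assms(1,2) by simp
  have "C' = C" using rotation assms(1) by simp
  then have "seg (\<psi> + int d) Q = seg (\<psi>' + int d) Q" by (simp add: canon_word_def Q_def)
  moreover have "seg \<psi> d = seg \<psi>' d"
  proof -
    have "(\<phi> - int d) mod int n = (\<phi>' - int d) mod int n" using phase by (metis mod_diff_left_eq)
    then have "seg (\<phi> - int d) d = seg (\<phi>' - int d) d" by (rule seg_cong)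
    then show ?thesis using overlap overlap' by (simp add: inv_overlap_iff)
  qed
  ultimately have "seg \<psi> (d + Q) = seg \<psi>' (d + Q)" by (simp add: seg_append)
  moreover note n_le_d_plus_Q
  ultimately have "\<psi> mod int n = \<psi>' mod int n" by (rule seg_phase_unique)
  then show ?thesis using phase Req_cong[of "(\<phi>, \<psi>)" "(\<phi>, \<psi>)" "(\<phi>', \<psi>')" "(\<phi>, \<psi>)"] by simp
qed

text \<open>... a shift by at most Q, which moves the pair along s diagonal generators, ...\<close>
lemma aligned_short:
  assumes "s + n \<le> P" "0 < s" "s \<le> Q"
  shows "Req (\<phi>, \<psi>) (\<phi>', \<psi>')"
proof -
  have d0: "d = 0" using aligned_no_overlap assms by simp
  have nQ: "n \<le> Q" using n_le_d_plus_Q d0 by simp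
  have junction: "x (\<psi> + int u) = x (\<phi> + int u)" if "u < s" for u
    using aligned_junction[OF assms(1) that] that assms(3) d0 by simp
  have diag: "Req (\<phi>, \<psi>) (\<phi> + int s, \<psi> + int s)"
    by (rule Req_diag_chain) (use junction in simp)
  have "(\<psi> + int s) mod int n = \<psi>' mod int n"
  proof (rule phase_unique)
    fix u assume u: "u < n"
    have "x (\<psi>' + int u) = C ! ((P + u + s) mod (P + Q))"
      using C'_right[of u] C'_nth[of "P + u"] u nQ d0 by simp
    also have "\<dots> = x (\<psi> + int s + int u)"
    proof (cases "u + s < Q")
      case True
      then show ?thesis using C_right[of "u + s"] d0 by (simp add: algebra_simps)
    next
      case False
      define w where "w = u + s - Q"
      have "w < s" using u nQ assms(2) by (simp add: w_def)
      then have w: "w < s" "w < P" using assms(1) by linarith+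
      have "P + u + s = w + (P + Q)" using False unfolding w_def by linarith
      then have "(P + u + s) mod (P + Q) = w" using w by (metis mod_add_self2 mod_less trans_less_add1)
      then have "C ! ((P + u + s) mod (P + Q)) = x (\<psi> + int w)" using C_left[OF w(2)] junction[OF w(1)] by simp
      also have "\<dots> = x (\<psi> + int s + int u)"
        using x_shift_Q[of "\<psi> + int w"] False d0 by (simp add: w_def of_nat_diff algebra_simps)
      finally show ?thesis .
    qed
    finally show "x (\<psi> + int s + int u) = x (\<psi>' + int u)" by simp
  qed
  then show ?thesis using diag aligned_phase[OF assms(1)]
      Req_cong[of "(\<phi>, \<psi>)" "(\<phi>, \<psi>)" "(\<phi> + int s, \<psi> + int s)" "(\<phi>', \<psi>')"] by simp
qed

text \<open>... and a shift by more than Q, where the junction shows that C is diagonal.\<close>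
lemma aligned_long:
  assumes "s + n \<le> P" "Q < s"
  shows "Req (\<phi>, \<psi>) (\<phi>', \<psi>')"
proof -
  have d0: "d = 0" using aligned_no_overlap assms by simp
  have nQ: "n \<le> Q" using n_le_d_plus_Q d0 by simp
  have "\<phi> mod int n = \<psi> mod int n"
    by (rule phase_unique) (use aligned_junction[OF assms(1)] assms(2) nQ d0 in simp)
  then show ?thesis using d0 diagonal_rigid by blast
qed

lemma aligned:
  assumes "s + n \<le> P" and overlap': "inv_overlap \<phi>' \<psi>' d"
  shows "Req (\<phi>, \<psi>) (\<phi>', \<psi>')"
proof -
  consider "s = 0" | "0 < s" "s \<le> Q" | "Q < s" by linarith
  then show ?thesis
  proof cases
    case 1
    then show ?thesis using aligned_no_shift[OF _ _ overlap'] assms(1) by simp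
  qed (use aligned_short aligned_long assms(1) in blast)+
qed

text \<open>Non-aligned case: C' does not begin with n letters of the first run of C, and C
  does not begin with n letters of the first run of C'.  Since the first run is longer
  than the second by at least n, this forces p = q' + 1 and s strictly between Q and P.\<close>
lemma nonaligned_window:
  assumes "p \<ge> 3" "q' < p" "P < s + n" "s < Q + n"
  shows "P = Q + n" "Q < s" "s < P" "n \<le> Q"
proof -
  have p: "p = q' + 1"
  proof (rule ccontr)
    assume "p \<noteq> q' + 1"
    then have "(q' + 2) * n \<le> p * n" using assms(2) by (intro mult_le_mono1) simp
    then show False using assms(3,4) d_plus_P d_plus_Q by (simp add: algebra_simps)
  qed
  then show P: "P = Q + n" using d_plus_P d_plus_Q by (simp add: algebra_simps)
  show "Q < s" "s < P" using P assms(3,4) by linarith+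
  have "2 * n \<le> q' * n" using p assms(1) by (intro mult_le_mono1) simp
  then show "n \<le> Q" using d_plus_Q d_less by linarith
qed

text \<open>The second run of C sits inside the first run of C', at offset P - s.\<close>
lemma nonaligned_phase:
  assumes "p \<ge> 3" "q' < p" "P < s + n" "s < Q + n"
  shows "(\<phi>' + int (P - s)) mod int n = (\<psi> + int d) mod int n"
proof (rule phase_unique)
  fix u assume u: "u < n"
  have w: "P = Q + n" "Q < s" "s < P" "n \<le> Q" using nonaligned_window[OF assms] by simp_all
  then have j: "P - s + u < P" "(P - s + u + s) mod (P + Q) = P + u" using u by auto
  have "x (\<phi>' + int (P - s) + int u) = C' ! (P - s + u)" using C'_left[OF j(1)] by (simp add: algebra_simps)
  also have "\<dots> = C ! (P + u)" using C'_nth[of "P - s + u"] j by simp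
  also have "\<dots> = x (\<psi> + int d + int u)" using C_right u w(4) by simp
  finally show "x (\<phi>' + int (P - s) + int u) = x (\<psi> + int d + int u)" .
qed

text \<open>The letter before the second run of C is then the last letter of the first run of C,
  so no overlap can have been cancelled there.\<close>
lemma nonaligned_no_overlap:
  assumes "p \<ge> 3" "q' < p" "P < s + n" "s < Q + n"
  shows "d = 0"
proof (rule ccontr)
  assume "d \<noteq> 0"
  have w: "Q < s" "s < P" using nonaligned_window[OF assms] by simp_all
  obtain k where k: "\<phi>' + int (P - s) = \<psi> + int d + int n * k"
    using mod_eq_shift[OF nonaligned_phase[OF assms]] by blast
  have j: "P - s - 1 < P" "(P - s - 1 + s) mod (P + Q) = P - 1" "P - 1 < P" using w by auto
  have "x (\<psi> + int d - 1) = x (\<phi>' + int (P - s - 1))"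
    by (rule x_eqI[where k = "- k"]) (use k w in \<open>simp add: of_nat_diff algebra_simps\<close>)
  also have "\<dots> = C ! (P - 1)" using C'_left[OF j(1)] C'_nth[of "P - s - 1"] j by simp
  also have "\<dots> = x (\<phi> - 1 + int P)" using C_left[OF j(3)] w by (simp add: of_nat_diff algebra_simps)
  also have "\<dots> = x (\<phi> - int d - 1)" using x_shift_P[of "\<phi> - 1"] by (simp add: algebra_simps)
  finally have "x (\<psi> + int d - 1) = x (\<phi> - int d - 1)" .
  moreover have "x (\<psi> + int d - 1) = bar (x (\<phi> - int d))" by (rule inv_overlap_last[OF overlap \<open>d \<noteq> 0\<close>])
  ultimately show False using x_reduced[of "\<phi> - int d - 1"] by simp
qed

lemma nonaligned_first_run:
  assumes "p \<ge> 3" "q' < p" "P < s + n" "s < Q + n"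
  shows "x (\<phi>' + a) = x (\<psi> - int (P - s) + a)"
proof -
  have "(\<phi>' + int (P - s)) mod int n = (\<psi> + int 0) mod int n"
    using nonaligned_phase[OF assms] unfolding nonaligned_no_overlap[OF assms] .
  then obtain k where "\<phi>' + int (P - s) = \<psi> + int n * k" using mod_eq_shift by auto
  then show ?thesis by (intro x_eqI[where k = k]) (simp add: algebra_simps)
qed

text \<open>Reading the first run of C' across the wrap-around of C: its first P - s letters are
  the end of the first run of C, ...\<close>
lemma nonaligned_tail:
  assumes "p \<ge> 3" "q' < p" "P < s + n" "s < Q + n" and v: "v < P - s"
  shows "x (\<phi> - int (P - s) + int v) = x (\<psi> - int (P - s) + int v)"
proof -
  have j: "v < P" "v + s < P" using v by linarith+
  have "x (\<psi> - int (P - s) + int v) = x (\<phi>' + int v)"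
    using nonaligned_first_run[OF assms(1-4)] by simp
  also have "\<dots> = x (\<phi> + int (v + s))"
    using C'_left[OF j(1)] C'_nth[of v] C_left[OF j(2)] j by simp
  also have "\<dots> = x (\<phi> - int (P - s) + int v + int P)"
    using j by (simp add: of_nat_diff algebra_simps)
  also have "\<dots> = x (\<phi> - int (P - s) + int v)"
    using x_shift_P nonaligned_no_overlap[OF assms(1-4)] by simp
  finally show ?thesis by simp
qed

text \<open>... and after the second run of C its last s - Q letters are the beginning of C.\<close>
lemma nonaligned_head:
  assumes "p \<ge> 3" "q' < p" "P < s + n" "s < Q + n" and v: "v < s - Q"
  shows "x (\<phi> + int v) = x (\<psi> + int v)"
proof -
  have w: "Q < s" "s < P" using nonaligned_window[OF assms(1-4)] by simp_all
  define t where "t = P - s + Q + v"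
  have j: "t < P" "v < P" "t + s = v + (P + Q)" using v w unfolding t_def by linarith+
  then have "(t + s) mod (P + Q) = v" by (metis mod_add_self2 mod_less trans_less_add1)
  then have "x (\<phi> + int v) = x (\<phi>' + int t)" using C'_left[OF j(1)] C'_nth[of t] C_left[OF j(2)] j by simp
  also have "\<dots> = x (\<psi> - int (P - s) + int t)" by (rule nonaligned_first_run[OF assms(1-4)])
  also have "\<dots> = x (\<psi> + int v + int Q)" using w by (simp add: t_def of_nat_diff algebra_simps)
  also have "\<dots> = x (\<psi> + int v)" using x_shift_Q nonaligned_no_overlap[OF assms(1-4)] by simp
  finally show ?thesis .
qed

text \<open>Together these are n consecutive letters, so the two runs of C have the same phase.\<close>
lemma nonaligned_diagonal:
  assumes "p \<ge> 3" "q' < p" "P < s + n" "s < Q + n"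
  shows "\<phi> mod int n = \<psi> mod int n"
proof -
  have w: "P = Q + n" "Q < s" "s < P" using nonaligned_window[OF assms] by simp_all
  define a where "a = P - s"
  have "(\<phi> - int a) mod int n = (\<psi> - int a) mod int n"
  proof (rule phase_unique)
    fix u assume "u < n"
    show "x (\<phi> - int a + int u) = x (\<psi> - int a + int u)"
    proof (cases "u < a")
      case False
      then have "u - a < s - Q" using \<open>u < n\<close> w unfolding a_def by linarith
      moreover have "\<phi> - int a + int u = \<phi> + int (u - a)" "\<psi> - int a + int u = \<psi> + int (u - a)"
        using False by (simp_all add: of_nat_diff)
      ultimately show ?thesis using nonaligned_head[OF assms] by metis
    qed (use nonaligned_tail[OF assms] a_def in blast)
  qed
  then have "(\<phi> - int a + int a) mod int n = (\<psi> - int a + int a) mod int n"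
    by (rule mod_add_cong) (rule refl)
  then show ?thesis by simp
qed

lemma nonaligned:
  assumes "p \<ge> 3" "q' < p" "P < s + n" "s < Q + n"
  shows "Req (\<phi>, \<psi>) (\<phi>', \<psi>')"
  using diagonal_rigid[OF nonaligned_no_overlap[OF assms] nonaligned_diagonal[OF assms]] .

end

context prim_word
begin

text \<open>Either the rotation or its inverse is aligned, or we are in the
  non-aligned case.\<close>
lemma canon_word_rigid:
  assumes "q' \<ge> 1" "p \<ge> 3" "q' < p" "d < n"
    and "inv_overlap \<phi> \<psi> d" "inv_overlap \<phi>' \<psi>' d"
    and rot: "rotate r (canon_word p q' \<phi> \<psi> d) = canon_word p q' \<phi>' \<psi>' d"
  shows "Req (\<phi>, \<psi>) (\<phi>', \<psi>')"
proof -
  define N where "N = length (canon_word p q' \<phi> \<psi> d)"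
  define s where "s = r mod N"
  have fwd_rot: "rotate s (canon_word p q' \<phi> \<psi> d) = canon_word p q' \<phi>' \<psi>' d"
    using rot by (simp add: s_def N_def rotate_conv_mod[of r])
  have "rotate (N - s) (canon_word p q' \<phi>' \<psi>' d) = rotate (N - s + s) (canon_word p q' \<phi> \<psi> d)"
    unfolding fwd_rot[symmetric] by (simp add: rotate_rotate)
  also have "\<dots> = canon_word p q' \<phi> \<psi> d"
    by (cases "N = 0") (simp_all add: s_def N_def)
  finally have bwd_rot: "rotate (N - s) (canon_word p q' \<phi>' \<psi>' d) = canon_word p q' \<phi> \<psi> d" .
  have "p \<ge> 1" using assms(2) by simp
  interpret fwd: rotated_canon X p q' d \<phi> \<psi> \<phi>' \<psi>' s
    by unfold_locales (fact \<open>p \<ge> 1\<close> assms(1,4,5) fwd_rot)+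
  interpret bwd: rotated_canon X p q' d \<phi>' \<psi>' \<phi> \<psi> "N - s"
    by unfold_locales (fact \<open>p \<ge> 1\<close> assms(1,4,6) bwd_rot)+
  have N: "N = fwd.P + fwd.Q" "0 < N"
    using fwd.Q_pos by (simp_all add: N_def canon_word_length fwd.P_def fwd.Q_def)
  have "s < N" using N(2) by (simp add: s_def)
  then consider (fwd_aligned) "s + n \<le> fwd.P" | (bwd_aligned) "N - s + n \<le> fwd.P"
    | (nonaligned) "fwd.P < s + n" "s < fwd.Q + n"
    using N(1) by linarith
  then show ?thesis
  proof cases
    case fwd_aligned then show ?thesis using fwd.aligned assms(6) by blast
  next
    case bwd_aligned then show ?thesis using bwd.aligned assms(5) Req_sym by blast
  next
    case nonaligned then show ?thesis using fwd.nonaligned assms(2,3) by blast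
  qed
qed

lemma Req_of_same_cycred_ordered:
  assumes "q' \<ge> 1" "p \<ge> 3" "q' < p"
    and same: "rot_equiv (cycred (seg i (p * n) @ seg j (q' * n)))
                         (cycred (seg k (p * n) @ seg h (q' * n)))"
  shows "Req (i, j) (k, h)"
proof -
  have "p \<ge> 1" using assms(2) by simp
  obtain \<phi> \<psi> d where a: "Req (i, j) (\<phi>, \<psi>)" "inv_overlap \<phi> \<psi> d" "d < n"
      "rot_equiv (cycred (seg i (p * n) @ seg j (q' * n))) (canon_word p q' \<phi> \<psi> d)"
    using canonical_form[OF \<open>p \<ge> 1\<close> assms(1)] by blast
  obtain \<phi>' \<psi>' d' where b: "Req (k, h) (\<phi>', \<psi>')" "inv_overlap \<phi>' \<psi>' d'" "d' < n"
      "rot_equiv (cycred (seg k (p * n) @ seg h (q' * n))) (canon_word p q' \<phi>' \<psi>' d')"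
    using canonical_form[OF \<open>p \<ge> 1\<close> assms(1)] by blast
  have "rot_equiv (canon_word p q' \<phi> \<psi> d) (canon_word p q' \<phi>' \<psi>' d')"
    using rot_equiv_trans[OF rot_equiv_trans[OF rot_equiv_sym[OF a(4)] same] b(4)] .
  then obtain r where rot: "canon_word p q' \<phi>' \<psi>' d' = rotate r (canon_word p q' \<phi> \<psi> d)"
    unfolding rot_equiv_def by blast
  then have "(p * n - d') + (q' * n - d') = (p * n - d) + (q' * n - d)"
    by (metis canon_word_length length_rotate)
  then have "d' = d"
    using period_bounds(1)[OF \<open>p \<ge> 1\<close> a(3)] period_bounds(1)[OF \<open>p \<ge> 1\<close> b(3)]
      period_bounds(1)[OF assms(1) a(3)] period_bounds(1)[OF assms(1) b(3)] by linarith
  then have "Req (\<phi>, \<psi>) (\<phi>', \<psi>')"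
    using canon_word_rigid[OF assms(1-3) a(3,2)] b(2) rot by simp
  then show ?thesis using a(1) b(1) by (blast intro: Req_trans Req_sym)
qed

lemma Req_of_same_cycred:
  assumes "p > 0" "q' > 0" "p \<noteq> q'" "p \<ge> 3 \<or> q' \<ge> 3"
    and same: "rot_equiv (cycred (seg i (p * n) @ seg j (q' * n)))
                         (cycred (seg k (p * n) @ seg h (q' * n)))"
  shows "Req (i, j) (k, h)"
proof (cases "q' < p")
  case True
  then have "p \<ge> 3" using assms(4) by linarith
  moreover have "q' \<ge> 1" using assms(2) by simp
  ultimately show ?thesis using Req_of_same_cycred_ordered[OF _ _ True same] by blast
next
  case False
  have "rot_equiv (cycred (seg j (q' * n) @ seg i (p * n))) (cycred (seg h (q' * n) @ seg k (p * n)))"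
    using rot_equiv_trans[OF rot_equiv_trans[OF cycred_swap same] cycred_swap] .
  moreover have "p < q'" "q' \<ge> 3" "p \<ge> 1" using False assms(1,3,4) by linarith+
  ultimately have "Req (j, i) (h, k)" using Req_of_same_cycred_ordered[of p q'] by blast
  then show ?thesis by (rule Req_swap)
qed

end

theorem proposition2p10:
  fixes q :: nat and ord X :: "letter list" and i j k h p q' :: nat
  assumes "q \<ge> 1"
    and "valid_order q ord"
    and "set X \<subseteq> alphabet q"
    and "primitive X"
    and "linking_pair ord X X (i, j)"
    and "linking_pair ord X X (k, h)"
    and "\<not> R_equiv X X (i, j) (k, h)"
    and "p > 0" and "q' > 0" and "p \<noteq> q'"
    and "p \<ge> 3 \<or> q' \<ge> 3"
  shows "\<not> same_cyclic_word q (wpow (rotate i X) p @ wpow (rotate j X) q')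
                               (wpow (rotate k X) p @ wpow (rotate h X) q')"
proof
  assume same: "same_cyclic_word q (wpow (rotate i X) p @ wpow (rotate j X) q')
                                   (wpow (rotate k X) p @ wpow (rotate h X) q')"
  interpret prim_word X using assms(4) by unfold_locales
  have powers_as_segments: "wpow (rotate a X) e = seg (int a) (e * n)" for a e
    by (simp add: rotate_seg wpow_seg)
  have "rot_equiv (cycred (seg (int i) (p * n) @ seg (int j) (q' * n)))
                  (cycred (seg (int k) (p * n) @ seg (int h) (q' * n)))"
    using cycred_same_cyclic_word[OF same] by (simp add: powers_as_segments)
  then have "Req (int i, int j) (int k, int h)" by (rule Req_of_same_cycred[OF assms(8-11)])
  moreover have "i < n" "j < n" "k < n" "h < n"
    using assms(5,6) by (auto simp: linking_pair_def)
  ultimately show False using assms(7) by (simp add: Req_def)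
qed

end
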